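(* Let $1<p<\infty$, $\alpha\in\mathbb R$, $\mathbb X=L^p(\log L)^\alpha(\mathbb T)$ and $\mathcal D=\{e^{inx}\}_{n\in\mathbb Z}$. There is $C>0$ such that $\Sigma_N(\mathcal D)$ satisfies property $A_3(H)$ for every $N$, with $$H(N)=C\max\Big\{N^{1/2},\ N^{1/p}(\log(e+N))^{-\alpha}\Big\}.$$
   Context: $\mathbb T\equiv[-\pi,\pi)$; $L^p(\log L)^\alpha(\mathbb T)$ is the Orlicz space $L^\Phi$, $\Phi(t)=\int_0^ts^{p-1}(\log(c+s))^{\alpha p}ds$ ($c>1$ fixed large enough that $\Phi$ is a Young function), Luxemburg norm. $\Sigma_N(\mathcal D)$ = linear combinations of at most $N$ elements of $\mathcal D$. Property $A_3(H)$ of $\Sigma_N$: for every $D<\infty$, $\sum_{j\in A}|a_j|\le H(|A|)\|\sum_{j\in B}a_j\phi_j\|$ for all scalars $a_j$ and finite $A\subset B\subset\mathbb Z$ with $|A|\le N$, $|B|<D$ (where $\phi_j=e^{ijx}$). *)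

theory Defs
  imports "HOL-Analysis.Analysis"
begin

definition LlogL_phi :: "real \<Rightarrow> real \<Rightarrow> real \<Rightarrow> real \<Rightarrow> real" where
  "LlogL_phi p \<alpha> c t = integral {0..t} (\<lambda>s. s powr (p - 1) * (ln (c + s)) powr (\<alpha> * p))"

definition luxemburg_norm :: "(real \<Rightarrow> real) \<Rightarrow> (real \<Rightarrow> complex) \<Rightarrow> real" where
  "luxemburg_norm \<Phi> f = Inf {r::real. r > 0 \<and>
      (\<integral>\<^sup>+ x \<in> {-pi..<pi}. ennreal (\<Phi> (cmod (f x) / r)) \<partial>lborel) \<le> 1}"

definition trig :: "int \<Rightarrow> real \<Rightarrow> complex" where
  "trig j x = exp (\<i> * of_int j * of_real x)"

end

theory Submission
  imports Defs
begin

(* Test f = sum_{j in B} a_j e_j against the dual polynomial g = sum_{j in A} sgn(a_j) e_j: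
   orthogonality gives 2 pi sum_A |a_j| = int f conj(g), while |g| <= n = |A| and int |g|^2 = 2 pi n.  Where u = |f|/r exceeds H, convexity of Phi gives
   u |g| <= n H Phi(u) / Phi(H); below H we use u |g| <= delta |g|^2 / 2 + u^2 / (2 delta) with
   delta = H / n, and control u^2 by Phi(u), since Phi(s) ~ s^p log^(alpha p) s and
   s^(2-p) log^(-alpha p) s is quasi-monotone.  For admissible r (int Phi(|f|/r) <= 1) and
   H = max(sqrt n, n^(1/p) log^(-alpha)(e+n)), which satisfies n <~ Phi(H) and n <= H^2,
   every term is O(H), so sum_A |a_j| <~ H r. *)

lemma convex_on_le_ratio:
  fixes \<Phi> :: "real \<Rightarrow> real"
  assumes cv: "convex_on {0..} \<Phi>" and \<Phi>0: "\<Phi> 0 = 0" and "0 \<le> s" "s \<le> t" "0 < t"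
  shows "\<Phi> s \<le> (s / t) * \<Phi> t"
proof -
  have "\<Phi> ((1 - s/t) *\<^sub>R 0 + (s/t) *\<^sub>R t) \<le> (1 - s/t) * \<Phi> 0 + (s/t) * \<Phi> t"
    by (rule convex_onD[OF cv]) (use assms in auto)
  then show ?thesis using assms by simp
qed

lemma Young_split_bound:
  fixes \<Phi> :: "real \<Rightarrow> real"
  assumes cv: "convex_on {0..} \<Phi>" and \<Phi>0: "\<Phi> 0 = 0" and \<Phi>_nonneg: "\<And>t. 0 \<le> t \<Longrightarrow> 0 \<le> \<Phi> t"
    and u: "0 \<le> u" and v: "0 \<le> v" "v \<le> N" and T: "0 < T" "0 < \<Phi> T" and \<delta>: "0 < \<delta>"
    and S: "0 \<le> S" "\<And>s. 1 \<le> s \<Longrightarrow> s < T \<Longrightarrow> s\<^sup>2 \<le> S * \<Phi> s"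
  shows "u * v \<le> (N * T / \<Phi> T + S / (2 * \<delta>)) * \<Phi> u + \<delta> / 2 * v\<^sup>2 + 1 / (2 * \<delta>)"
proof -
  have \<Phi>u: "0 \<le> \<Phi> u" using \<Phi>_nonneg u .
  have N: "0 \<le> N" using v by simp
  have rest: "0 \<le> \<delta> / 2 * v\<^sup>2 + 1 / (2 * \<delta>)" "0 \<le> S / (2 * \<delta>) * \<Phi> u"
    using \<delta> S \<Phi>u by simp_all
  show ?thesis
  proof (cases "T \<le> u")
    case True
    have "\<Phi> T \<le> (T / u) * \<Phi> u" using convex_on_le_ratio[OF cv \<Phi>0, of T u] True T by auto
    then have "u \<le> T * \<Phi> u / \<Phi> T" using True T by (simp add: field_simps)
    then have "u * v \<le> (T * \<Phi> u / \<Phi> T) * N"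
      using u v N by (meson mult_mono order.trans mult_left_mono)
    then show ?thesis using rest by (simp add: algebra_simps)
  next
    case False
    have "u\<^sup>2 \<le> 1 + S * \<Phi> u"
    proof (cases "u \<le> 1")
      case True
      then have "u\<^sup>2 \<le> 1" using u by (simp add: power_le_one)
      then show ?thesis using S \<Phi>u by (simp add: add_increasing2)
    next
      case False
      then show ?thesis using S(2)[of u] \<open>\<not> T \<le> u\<close> by simp
    qed
    moreover have "u * v \<le> \<delta> / 2 * v\<^sup>2 + u\<^sup>2 / (2 * \<delta>)"
    proof -
      have "0 \<le> (\<delta> * v - u)\<^sup>2 / (2 * \<delta>)" using \<delta> by simp
      also have "\<dots> = \<delta> / 2 * v\<^sup>2 + u\<^sup>2 / (2 * \<delta>) - u * v"
        using \<delta> by (simp add: power2_eq_square field_simps)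
      finally show ?thesis by simp
    qed
    moreover have "u\<^sup>2 / (2 * \<delta>) \<le> 1 / (2 * \<delta>) + S / (2 * \<delta>) * \<Phi> u"
      using calculation(1) \<delta> by (simp add: divide_right_mono flip: add_divide_distrib)
    moreover have "0 \<le> N * T / \<Phi> T * \<Phi> u" using N T \<Phi>u by simp
    ultimately show ?thesis by (simp add: algebra_simps)
  qed
qed

lemma nn_set_integral_atLeastLessThan_eq:
  fixes h :: "real \<Rightarrow> real"
  assumes hi: "(h has_integral I) {a..b}" and nn: "\<And>x. 0 \<le> h x"
  shows "(\<integral>\<^sup>+x\<in>{a..<b}. ennreal (h x) \<partial>lborel) = ennreal I"
proof -
  have "negligible {x \<in> {a..b} - {a..<b}. h x \<noteq> 0}"
    by (rule negligible_subset[OF negligible_sing[of b]]) auto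
  moreover have "negligible {x \<in> {a..<b} - {a..b}. h x \<noteq> 0}"
    by (rule negligible_subset[OF negligible_empty]) auto
  ultimately have "(h has_integral I) {a..<b}"
    using has_integral_spike_set_eq hi by blast
  then show ?thesis by (intro nn_integral_has_integral_lebesgue') (use nn in auto)
qed

lemma integral_le_of_modular_bound:
  fixes \<Phi> F G Q :: "real \<Rightarrow> real"
  assumes F: "continuous_on UNIV F" "\<And>x. 0 \<le> F x" and G: "continuous_on UNIV G" "\<And>x. 0 \<le> G x"
    and \<Phi>F: "(\<lambda>x. \<Phi> (F x)) \<in> borel_measurable borel" "\<And>x. 0 \<le> \<Phi> (F x)"
      "(\<integral>\<^sup>+x\<in>{a..<b}. ennreal (\<Phi> (F x)) \<partial>lborel) \<le> 1"
    and Q: "continuous_on UNIV Q" "\<And>x. 0 \<le> Q x" "(Q has_integral IQ) {a..b}"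
    and k: "0 \<le> k" and le: "\<And>x. F x * G x \<le> k * \<Phi> (F x) + Q x"
  shows "integral {a..b} (\<lambda>x. F x * G x) \<le> k + IQ"
proof -
  have IQ: "0 \<le> IQ" by (rule has_integral_nonneg[OF Q(3) Q(2)])
  have FG: "((\<lambda>x. F x * G x) has_integral integral {a..b} (\<lambda>x. F x * G x)) {a..b}"
    by (intro integrable_integral integrable_continuous_real continuous_intros
        continuous_on_subset[OF F(1)] continuous_on_subset[OF G(1)]) auto
  have "ennreal (integral {a..b} (\<lambda>x. F x * G x)) = (\<integral>\<^sup>+x\<in>{a..<b}. ennreal (F x * G x) \<partial>lborel)"
    using nn_set_integral_atLeastLessThan_eq[OF FG] F(2) G(2) by simp
  also have "\<dots> \<le> (\<integral>\<^sup>+x\<in>{a..<b}. (ennreal k * ennreal (\<Phi> (F x)) + ennreal (Q x)) \<partial>lborel)"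
    using le k Q(2) \<Phi>F(2)
    by (intro nn_integral_mono mult_right_mono) (simp_all add: ennreal_leI flip: ennreal_mult ennreal_plus)
  also have "\<dots> = ennreal k * (\<integral>\<^sup>+x\<in>{a..<b}. ennreal (\<Phi> (F x)) \<partial>lborel)
                 + (\<integral>\<^sup>+x\<in>{a..<b}. ennreal (Q x) \<partial>lborel)"
    using \<Phi>F(1) borel_measurable_continuous_onI[OF Q(1)]
    by (simp add: distrib_right nn_integral_add nn_integral_cmult mult.assoc)
  also have "\<dots> \<le> ennreal (k + IQ)"
    using mult_left_mono[OF \<Phi>F(3), of "ennreal k"] k IQ
    unfolding nn_set_integral_atLeastLessThan_eq[OF Q(3) Q(2)]
    by (subst ennreal_plus) (auto intro: add_right_mono)
  finally show ?thesis by (subst (asm) ennreal_le_iff) (use k IQ in auto)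
qed

lemma Young_split_integral_bound:
  fixes \<Phi> F G :: "real \<Rightarrow> real"
  assumes mono: "mono \<Phi>" and \<Phi>0: "\<Phi> 0 = 0" and cv: "convex_on {0..} \<Phi>"
    and F: "continuous_on UNIV F" "\<And>x. 0 \<le> F x"
    and \<Phi>F: "(\<integral>\<^sup>+x\<in>{a..<b}. ennreal (\<Phi> (F x)) \<partial>lborel) \<le> 1"
    and G: "continuous_on UNIV G" "\<And>x. 0 \<le> G x" "\<And>x. G x \<le> N"
    and G2: "((\<lambda>x. (G x)\<^sup>2) has_integral IG) {a..b}" and ab: "a \<le> b"
    and T: "0 < T" "0 < \<Phi> T" and \<delta>: "0 < \<delta>"
    and S: "0 \<le> S" "\<And>s. 1 \<le> s \<Longrightarrow> s < T \<Longrightarrow> s\<^sup>2 \<le> S * \<Phi> s"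
  shows "integral {a..b} (\<lambda>x. F x * G x)
           \<le> N * T / \<Phi> T + S / (2 * \<delta>) + (\<delta> / 2 * IG + (b - a) / (2 * \<delta>))"
proof (rule integral_le_of_modular_bound[OF F G(1,2) _ _ \<Phi>F])
  have \<Phi>_nonneg: "0 \<le> \<Phi> t" if "0 \<le> t" for t
    using monoD[OF mono that] \<Phi>0 by simp
  show "(\<lambda>x. \<Phi> (F x)) \<in> borel_measurable borel"
    using measurable_compose[OF borel_measurable_continuous_onI[OF F(1)] borel_measurable_mono[OF mono]]
    by (simp add: o_def)
  show "0 \<le> \<Phi> (F x)" for x using \<Phi>_nonneg F(2) .
  show "continuous_on UNIV (\<lambda>x. \<delta> / 2 * (G x)\<^sup>2 + 1 / (2 * \<delta>))"
    by (intro continuous_intros G(1))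
  show "0 \<le> \<delta> / 2 * (G x)\<^sup>2 + 1 / (2 * \<delta>)" for x using \<delta> by simp
  show "((\<lambda>x. \<delta> / 2 * (G x)\<^sup>2 + 1 / (2 * \<delta>)) has_integral \<delta> / 2 * IG + (b - a) / (2 * \<delta>)) {a..b}"
    using has_integral_mult_right[OF G2, of "\<delta> / 2"] has_integral_const_real[of "1 / (2 * \<delta>)" a b] ab
    by (intro has_integral_add) auto
  show "0 \<le> N * T / \<Phi> T + S / (2 * \<delta>)" using G T \<delta> S order_trans[OF G(2,3)] by simp
  show "F x * G x \<le> (N * T / \<Phi> T + S / (2 * \<delta>)) * \<Phi> (F x) + (\<delta> / 2 * (G x)\<^sup>2 + 1 / (2 * \<delta>))" for x
    using Young_split_bound[OF cv \<Phi>0 \<Phi>_nonneg F(2) G(2,3) T \<delta> S] by (simp add: add.assoc)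
qed

lemma luxemburg_admissible_exists:
  fixes \<Phi> :: "real \<Rightarrow> real" and f :: "real \<Rightarrow> complex"
  assumes mono: "mono \<Phi>" and \<Phi>0: "\<Phi> 0 = 0" and cv: "convex_on {0..} \<Phi>"
    and bound: "\<And>x. cmod (f x) \<le> M"
  shows "\<exists>r>0. (\<integral>\<^sup>+ x \<in> {-pi..<pi}. ennreal (\<Phi> (cmod (f x) / r)) \<partial>lborel) \<le> 1"
proof -
  define m where "m = 2 * pi * \<Phi> 1 + 1"
  define r where "r = (\<bar>M\<bar> + 1) * m"
  have \<Phi>1: "0 \<le> \<Phi> 1" using monoD[OF mono, of 0 1] \<Phi>0 by simp
  have m: "0 < m" unfolding m_def using \<Phi>1 by (simp add: add_nonneg_pos)
  have r: "0 < r" unfolding r_def using m by simp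
  have "\<Phi> (cmod (f x) / r) \<le> 1 / (2 * pi)" for x
  proof -
    define u where "u = cmod (f x) / r"
    have u: "0 \<le> u" using r by (simp add: u_def)
    have "u \<le> (\<bar>M\<bar> + 1) / r" unfolding u_def using bound[of x] r by (simp add: divide_right_mono)
    then have um: "u \<le> 1 / m" using m by (simp add: r_def)
    moreover have "1 / m \<le> 1" using \<Phi>1 m by (simp add: m_def divide_le_eq)
    ultimately have "u \<le> 1" by linarith
    then have "\<Phi> u \<le> u * \<Phi> 1" using convex_on_le_ratio[OF cv \<Phi>0 u, of 1] by simp
    also have "\<dots> \<le> \<Phi> 1 / m" using um \<Phi>1 by (metis divide_inverse inverse_eq_divide mult.commute mult_left_mono)
    also have "\<dots> \<le> 1 / (2 * pi)"
    proof -
      have "\<Phi> 1 * (2 * pi) \<le> 1 * m" by (simp add: m_def)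
      then show ?thesis using m by (simp add: divide_le_eq le_divide_eq mult.commute)
    qed
    finally show ?thesis unfolding u_def .
  qed
  then have "(\<integral>\<^sup>+ x \<in> {-pi..<pi}. ennreal (\<Phi> (cmod (f x) / r)) \<partial>lborel)
      \<le> (\<integral>\<^sup>+ x \<in> {-pi..<pi}. ennreal (1 / (2 * pi)) \<partial>lborel)"
    by (intro nn_integral_mono mult_right_mono ennreal_leI) auto
  also have "\<dots> = 1"
    by (simp add: nn_integral_cmult_indicator ennreal_mult[symmetric])
  finally show ?thesis using r by blast
qed

lemma le_luxemburg_norm:
  assumes admissible: "\<exists>r>0. (\<integral>\<^sup>+ x \<in> {-pi..<pi}. ennreal (\<Phi> (cmod (f x) / r)) \<partial>lborel) \<le> 1"
    and M: "0 \<le> M"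
    and le: "\<And>r. 0 < r \<Longrightarrow> (\<integral>\<^sup>+ x \<in> {-pi..<pi}. ennreal (\<Phi> (cmod (f x) / r)) \<partial>lborel) \<le> 1
               \<Longrightarrow> X \<le> M * r"
  shows "X \<le> M * luxemburg_norm \<Phi> f"
proof -
  define R where "R = {r::real. r > 0 \<and>
      (\<integral>\<^sup>+ x \<in> {-pi..<pi}. ennreal (\<Phi> (cmod (f x) / r)) \<partial>lborel) \<le> 1}"
  have R: "R \<noteq> {}" using admissible by (auto simp: R_def)
  have "0 \<le> Inf R" by (rule cInf_greatest[OF R]) (auto simp: R_def)
  show ?thesis
  proof (cases "M = 0")
    case True
    obtain r where "r \<in> R" using R by blast
    then show ?thesis using le True by (auto simp: R_def)
  next
    case False
    then have "X / M \<le> Inf R"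
      using M le by (intro cInf_greatest[OF R]) (auto simp: R_def divide_le_eq mult.commute)
    then show ?thesis
      using False M by (simp add: luxemburg_norm_def R_def divide_le_eq mult.commute)
  qed
qed

lemma norm_trig [simp]: "cmod (trig j x) = 1"
  unfolding trig_def by (simp add: norm_exp_eq_Re)

lemma trig_mult: "trig j x * trig k x = trig (j + k) x"
  unfolding trig_def by (simp add: exp_add[symmetric] algebra_simps)

lemma cnj_trig: "cnj (trig j x) = trig (- j) x"
  unfolding trig_def by (simp add: exp_cnj)

lemma continuous_on_trig [continuous_intros]: "continuous_on S (trig j)"
  unfolding trig_def by (intro continuous_intros)

lemma trig_has_integral:
  "(trig m has_integral (if m = 0 then of_real (2 * pi) else 0)) {-pi..pi}"
proof (cases "m = 0")
  case True
  then have "trig m = (\<lambda>x. 1)" by (simp add: trig_def fun_eq_iff)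
  then show ?thesis using True has_integral_const_real[of "1::complex" "-pi" pi]
    by (simp add: scaleR_conv_of_real)
next
  case False
  define F where "F = (\<lambda>x::real. exp (\<i> * of_int m * of_real x) / (\<i> * of_int m))"
  have "(F has_vector_derivative trig m x) (at x within {-pi..pi})" for x
  proof -
    have "((\<lambda>z. exp (\<i> * of_int m * z) / (\<i> * of_int m)) has_field_derivative
            exp (\<i> * of_int m * of_real x)) (at (of_real x))"
      using False by (auto intro!: derivative_eq_intros simp: field_simps)
    from has_vector_derivative_real_field[OF this] show ?thesis
      unfolding F_def trig_def by (rule has_vector_derivative_at_within)
  qed
  then have "(trig m has_integral (F pi - F (-pi))) {-pi..pi}"
    by (intro fundamental_theorem_of_calculus) auto
  moreover have "F pi = F (-pi)"
  proof -
    have "\<i> * of_int m * of_real pi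
        = \<i> * of_int m * of_real (-pi) + complex_of_real (2 * real_of_int m * pi) * \<i>"
      by (simp add: algebra_simps)
    then have "exp (\<i> * of_int m * of_real pi)
        = exp (\<i> * of_int m * of_real (-pi)) * exp (complex_of_real (2 * real_of_int m * pi) * \<i>)"
      by (metis exp_add)
    also have "exp (complex_of_real (2 * real_of_int m * pi) * \<i>) = 1"
      by (rule exp_integer_2pi) simp
    finally show ?thesis unfolding F_def by simp
  qed
  ultimately show ?thesis using False by simp
qed

lemma trig_poly_inner_has_integral:
  fixes a b :: "int \<Rightarrow> complex"
  assumes B: "finite B" and AB: "A \<subseteq> B"
  shows "((\<lambda>x. (\<Sum>k\<in>B. a k * trig k x) * cnj (\<Sum>j\<in>A. b j * trig j x)) has_integral
           of_real (2 * pi) * (\<Sum>j\<in>A. a j * cnj (b j))) {-pi..pi}"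
proof -
  have A: "finite A" using B AB by (rule finite_subset[rotated])
  have "(\<Sum>k\<in>B. a k * trig k x) * cnj (\<Sum>j\<in>A. b j * trig j x)
          = (\<Sum>k\<in>B. \<Sum>j\<in>A. (a k * cnj (b j)) * trig (k - j) x)" for x
    by (simp add: cnj_sum cnj_trig sum_product trig_mult algebra_simps)
  moreover have "((\<lambda>x. \<Sum>k\<in>B. \<Sum>j\<in>A. (a k * cnj (b j)) * trig (k - j) x) has_integral
        (\<Sum>k\<in>B. \<Sum>j\<in>A. (a k * cnj (b j)) * (if k - j = 0 then of_real (2 * pi) else 0))) {-pi..pi}"
    by (intro has_integral_sum B A ballI has_integral_mult_right trig_has_integral)
  moreover have "(\<Sum>k\<in>B. \<Sum>j\<in>A. (a k * cnj (b j)) * (if k - j = 0 then of_real (2 * pi) else 0))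
      = of_real (2 * pi) * (\<Sum>j\<in>A. a j * cnj (b j))"
  proof -
    have "(\<Sum>k\<in>B. \<Sum>j\<in>A. (a k * cnj (b j)) * (if k - j = 0 then of_real (2 * pi) else 0))
        = (\<Sum>j\<in>A. \<Sum>k\<in>B. if k = j then (a k * cnj (b j)) * of_real (2 * pi) else 0)"
      by (subst sum.swap) (intro sum.cong refl, auto)
    also have "\<dots> = (\<Sum>j\<in>A. (a j * cnj (b j)) * of_real (2 * pi))"
      using AB B by (intro sum.cong refl) (auto simp: sum.delta)
    finally show ?thesis by (simp add: sum_distrib_left mult.commute)
  qed
  ultimately show ?thesis by simp
qed

lemma trig_poly_dual:
  fixes a :: "int \<Rightarrow> complex"
  assumes B: "finite B" and AB: "A \<subseteq> B"
  obtains g where "continuous_on UNIV g" "\<And>x. cmod (g x) \<le> real (card A)"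
    "((\<lambda>x. (cmod (g x))\<^sup>2) has_integral 2 * pi * real (card A)) {-pi..pi}"
    "2 * pi * (\<Sum>j\<in>A. cmod (a j))
       \<le> integral {-pi..pi} (\<lambda>x. cmod (\<Sum>j\<in>B. a j * trig j x) * cmod (g x))"
proof
  \<comment> \<open>Unimodular phases also where a j = 0, so that the squared norm of g integrates to exactly 2 pi |A|.\<close>
  define \<sigma> where "\<sigma> j = (if a j = 0 then 1 else sgn (a j))" for j
  define g where "g x = (\<Sum>j\<in>A. \<sigma> j * trig j x)" for x
  define f where "f x = (\<Sum>j\<in>B. a j * trig j x)" for x
  have A: "finite A" using B AB by (rule finite_subset[rotated])
  have norm_\<sigma>: "cmod (\<sigma> j) = 1" for j by (simp add: \<sigma>_def norm_sgn)
  have a_\<sigma>: "a j * cnj (\<sigma> j) = of_real (cmod (a j))" for j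
    by (simp add: \<sigma>_def sgn_div_norm complex_cnj_divide complex_norm_square[symmetric] power2_eq_square
        scaleR_conv_of_real field_simps)
  have \<sigma>_\<sigma>: "\<sigma> j * cnj (\<sigma> j) = 1" for j
    using complex_norm_square[of "\<sigma> j"] norm_\<sigma>[of j] by simp
  show g_cont: "continuous_on UNIV g" unfolding g_def by (intro continuous_intros)
  show "cmod (g x) \<le> real (card A)" for x
    using norm_sum[of "\<lambda>j. \<sigma> j * trig j x" A] by (simp add: g_def norm_mult norm_\<sigma>)
  have "((\<lambda>x. Re (g x * cnj (g x))) has_integral Re (of_real (2 * pi) * of_nat (card A))) {-pi..pi}"
    using has_integral_Re[OF trig_poly_inner_has_integral[OF A order_refl, of \<sigma> \<sigma>]]
    by (simp add: g_def \<sigma>_\<sigma>)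
  then show "((\<lambda>x. (cmod (g x))\<^sup>2) has_integral 2 * pi * real (card A)) {-pi..pi}"
    by (simp flip: complex_norm_square)
  have fg: "((\<lambda>x. f x * cnj (g x)) has_integral of_real (2 * pi * (\<Sum>j\<in>A. cmod (a j)))) {-pi..pi}"
    using trig_poly_inner_has_integral[OF B AB, of a \<sigma>] by (simp add: f_def g_def a_\<sigma>)
  have "cmod (of_real (2 * pi * (\<Sum>j\<in>A. cmod (a j))) :: complex)
      \<le> integral {-pi..pi} (\<lambda>x. cmod (f x) * cmod (g x))"
  proof -
    have "(\<lambda>x. cmod (f x) * cmod (g x)) integrable_on {-pi..pi}"
      unfolding f_def by (intro integrable_continuous_real continuous_intros continuous_on_subset[OF g_cont]) auto
    from integral_norm_bound_integral[OF has_integral_integrable[OF fg] this] fg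
    show ?thesis by (simp add: norm_mult integral_unique)
  qed
  then show "2 * pi * (\<Sum>j\<in>A. cmod (a j))
       \<le> integral {-pi..pi} (\<lambda>x. cmod (\<Sum>j\<in>B. a j * trig j x) * cmod (g x))"
    by (subst (asm) norm_of_real) (simp add: f_def sum_nonneg)
qed

lemma sum_norm_coeffs_le_admissible:
  fixes \<Phi> :: "real \<Rightarrow> real" and a :: "int \<Rightarrow> complex"
  assumes mono: "mono \<Phi>" and \<Phi>0: "\<Phi> 0 = 0" and cv: "convex_on {0..} \<Phi>"
    and B: "finite B" and AB: "A \<subseteq> B" and A: "A \<noteq> {}"
    and r: "0 < r"
    and admissible: "(\<integral>\<^sup>+ x \<in> {-pi..<pi}. ennreal (\<Phi> (cmod (\<Sum>j\<in>B. a j * trig j x) / r)) \<partial>lborel) \<le> 1"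
    and H: "0 < H" "real (card A) \<le> H\<^sup>2" "0 < \<Phi> H" "real (card A) * H / \<Phi> H \<le> K * H"
    and S: "0 \<le> S" "\<And>s. 1 \<le> s \<Longrightarrow> s < H \<Longrightarrow> s\<^sup>2 \<le> S * \<Phi> s" "S * real (card A) / H \<le> K * H"
  shows "(\<Sum>j\<in>A. cmod (a j)) \<le> (K + pi) / pi * H * r"
proof -
  define n where "n = real (card A)"
  define f where "f x = (\<Sum>j\<in>B. a j * trig j x)" for x
  have n: "0 < n" unfolding n_def using A B AB by (simp add: card_gt_0_iff finite_subset)
  obtain g where g: "continuous_on UNIV g" "\<And>x. cmod (g x) \<le> n"
    "((\<lambda>x. (cmod (g x))\<^sup>2) has_integral 2 * pi * n) {-pi..pi}"
    "2 * pi * (\<Sum>j\<in>A. cmod (a j)) \<le> integral {-pi..pi} (\<lambda>x. cmod (f x) * cmod (g x))"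
    using trig_poly_dual[OF B AB, of a] unfolding n_def f_def by blast
  have "integral {-pi..pi} (\<lambda>x. cmod (f x) / r * cmod (g x))
      \<le> n * H / \<Phi> H + S / (2 * (H / n)) + (H / n / 2 * (2 * pi * n) + (pi - - pi) / (2 * (H / n)))"
  proof (rule Young_split_integral_bound[OF mono \<Phi>0 cv _ _ _ _ _ _ g(3) _ H(1,3) _ S(1,2)])
    show "continuous_on UNIV (\<lambda>x. cmod (f x) / r)"
      unfolding f_def using r by (intro continuous_intros) auto
    show "continuous_on UNIV (\<lambda>x. cmod (g x))" by (intro continuous_intros g(1))
  qed (use admissible r H n g(2) in \<open>simp_all add: f_def n_def\<close>)
  also have "\<dots> \<le> 2 * (K + pi) * H"
  proof -
    have "0 \<le> n * H / \<Phi> H" using n H by simp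
    then have "0 \<le> K * H" using H(4) by (simp add: n_def)
    moreover have "S / (2 * (H / n)) = S * n / H / 2" using n by simp
    ultimately have "S / (2 * (H / n)) \<le> K * H" using S(3) by (simp add: n_def)
    moreover have "(pi - - pi) / (2 * (H / n)) \<le> pi * H"
      using H(1,2) n by (simp add: field_simps power2_eq_square n_def)
    moreover have "H / n / 2 * (2 * pi * n) = pi * H" using n by simp
    ultimately show ?thesis using H(4) by (simp add: n_def algebra_simps)
  qed
  finally have "integral {-pi..pi} (\<lambda>x. cmod (f x) * cmod (g x)) / r \<le> 2 * (K + pi) * H"
    by (simp add: field_simps)
  then show ?thesis using g(4) r by (simp add: field_simps)
qed

lemma sum_norm_coeffs_le_luxemburg_norm:
  fixes \<Phi> :: "real \<Rightarrow> real" and a :: "int \<Rightarrow> complex"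
  assumes mono: "mono \<Phi>" and \<Phi>0: "\<Phi> 0 = 0" and cv: "convex_on {0..} \<Phi>"
    and B: "finite B" and AB: "A \<subseteq> B" and A: "A \<noteq> {}" and K: "0 \<le> K"
    and H: "0 < H" "real (card A) \<le> H\<^sup>2" "0 < \<Phi> H" "real (card A) * H / \<Phi> H \<le> K * H"
    and S: "0 \<le> S" "\<And>s. 1 \<le> s \<Longrightarrow> s < H \<Longrightarrow> s\<^sup>2 \<le> S * \<Phi> s" "S * real (card A) / H \<le> K * H"
  shows "(\<Sum>j\<in>A. cmod (a j)) \<le> (K + pi) / pi * H * luxemburg_norm \<Phi> (\<lambda>x. \<Sum>j\<in>B. a j * trig j x)"
proof (rule le_luxemburg_norm)
  have "cmod (\<Sum>j\<in>B. a j * trig j x) \<le> (\<Sum>j\<in>B. cmod (a j))" for x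
    using norm_sum[of "\<lambda>j. a j * trig j x" B] by (simp add: norm_mult)
  then show "\<exists>r>0. (\<integral>\<^sup>+ x \<in> {-pi..<pi}. ennreal (\<Phi> (cmod (\<Sum>j\<in>B. a j * trig j x) / r)) \<partial>lborel) \<le> 1"
    by (rule luxemburg_admissible_exists[OF mono \<Phi>0 cv])
  show "0 \<le> (K + pi) / pi * H" using K H by simp
qed (rule sum_norm_coeffs_le_admissible[OF mono \<Phi>0 cv B AB A _ _ H S])

lemma LlogL_phi_nonpos: "t \<le> 0 \<Longrightarrow> LlogL_phi p \<alpha> c t = 0"
  unfolding LlogL_phi_def by (cases "t = 0") simp_all

lemma LlogL_phi_nonneg: "0 \<le> LlogL_phi p \<alpha> c t"
proof (cases "(\<lambda>s. s powr (p - 1) * (ln (c + s)) powr (\<alpha> * p)) integrable_on {0..t}")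
  case True
  then show ?thesis unfolding LlogL_phi_def by (rule integral_nonneg) auto
next
  case False
  then show ?thesis unfolding LlogL_phi_def by (simp add: not_integrable_integral)
qed

lemma LlogL_phi_mono:
  assumes cv: "convex_on {0..} (LlogL_phi p \<alpha> c)"
  shows "mono (LlogL_phi p \<alpha> c)"
proof (rule monoI)
  fix s t :: real assume st: "s \<le> t"
  show "LlogL_phi p \<alpha> c s \<le> LlogL_phi p \<alpha> c t"
  proof (cases "s \<le> 0")
    case True
    then show ?thesis using LlogL_phi_nonpos LlogL_phi_nonneg by simp
  next
    case False
    then have "LlogL_phi p \<alpha> c s \<le> (s / t) * LlogL_phi p \<alpha> c t"
      using convex_on_le_ratio[OF cv LlogL_phi_nonpos, of s t] st by auto
    also have "\<dots> \<le> LlogL_phi p \<alpha> c t"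
      using False st LlogL_phi_nonneg[of p \<alpha> c t] by (intro mult_left_le_one_le) auto
    finally show ?thesis .
  qed
qed

lemma LlogL_integrand_integrable:
  fixes p c \<alpha> a b :: real
  assumes "1 < p" "1 < c" "0 \<le> a"
  shows "(\<lambda>s. s powr (p - 1) * (ln (c + s)) powr (\<alpha> * p)) integrable_on {a..b}"
proof (rule integrable_continuous_interval)
  have "continuous_on {a..b} (\<lambda>s::real. s powr (p - 1))"
    by (rule continuous_on_powr') (use assms in \<open>auto intro: continuous_intros\<close>)
  moreover have "continuous_on {a..b} (\<lambda>s. (ln (c + s)) powr (\<alpha> * p))"
    by (rule continuous_on_powr) (use assms in \<open>auto intro!: continuous_intros\<close>)
  ultimately show "continuous_on {a..b} (\<lambda>s. s powr (p - 1) * (ln (c + s)) powr (\<alpha> * p))"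
    by (rule continuous_on_mult)
qed

lemma powr_le_powr_of_comparable:
  fixes x y K b :: real
  assumes "0 < x" "0 < y" "x \<le> K * y" "y \<le> K * x" "1 \<le> K"
  shows "K powr (- \<bar>b\<bar>) * y powr b \<le> x powr b"
proof -
  define t where "t = x / y"
  have t: "0 < t" "1 / K \<le> t" "t \<le> K" using assms by (auto simp: t_def field_simps)
  have "K powr (- \<bar>b\<bar>) \<le> t powr b"
  proof (cases "0 \<le> b")
    case True
    have "K powr (- \<bar>b\<bar>) = (1 / K) powr b" using True assms by (simp add: powr_minus_divide powr_divide)
    also have "\<dots> \<le> t powr b" using t True assms by (intro powr_mono2) auto
    finally show ?thesis .
  next
    case False
    then show ?thesis using t by (simp add: powr_mono2')
  qed
  then have "K powr (- \<bar>b\<bar>) * y powr b \<le> t powr b * y powr b"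
    by (intro mult_right_mono) auto
  also have "\<dots> = x powr b" using assms t by (simp add: t_def powr_divide)
  finally show ?thesis .
qed

lemma ln_add_le_ln_add_half:
  fixes c T :: real
  assumes "1 < c" "0 \<le> T"
  shows "ln (c + T) \<le> (1 + ln 2 / ln c) * ln (c + T / 2)"
proof -
  have "ln (c + T) \<le> ln (2 * (c + T/2))" using assms by simp
  also have "\<dots> = ln 2 + ln (c + T/2)" using assms by (intro ln_mult_pos) auto
  also have "ln 2 = (ln 2 / ln c) * ln c" using assms by simp
  also have "\<dots> \<le> (ln 2 / ln c) * ln (c + T/2)" using assms by (intro mult_left_mono) auto
  finally show ?thesis by (simp add: algebra_simps)
qed

lemma LlogL_phi_lower_bound:
  fixes p \<alpha> c T :: real
  assumes p: "1 < p" and c: "1 < c" and T: "0 < T"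
  shows "2 powr (-p) * (1 + ln 2 / ln c) powr (- \<bar>\<alpha> * p\<bar>) * (T powr p * ln (c + T) powr (\<alpha> * p))
           \<le> LlogL_phi p \<alpha> c T"
proof -
  define h where "h s = s powr (p - 1) * (ln (c + s)) powr (\<alpha> * p)" for s
  define K where "K = 1 + ln 2 / ln c"
  define m where "m = (T/2) powr (p-1) * (K powr (- \<bar>\<alpha> * p\<bar>) * ln (c + T) powr (\<alpha> * p))"
  have K: "1 \<le> K" using c by (simp add: K_def)
  have int: "h integrable_on {a..b}" if "0 \<le> a" for a b
    unfolding h_def using LlogL_integrand_integrable[OF p c that] .
  have m_le: "m \<le> h s" if s: "s \<in> {T/2..T}" for s
  proof -
    have "ln (c + T) \<le> K * ln (c + T/2)" unfolding K_def using ln_add_le_ln_add_half[OF c] T by simp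
    also have "\<dots> \<le> K * ln (c + s)" using K s c T by (intro mult_left_mono) auto
    finally have "K powr (- \<bar>\<alpha> * p\<bar>) * ln (c + T) powr (\<alpha> * p) \<le> ln (c + s) powr (\<alpha> * p)"
      using s c T K by (intro powr_le_powr_of_comparable) (auto intro: order_trans[of _ "ln (c + T)"])
    moreover have "(T/2) powr (p-1) \<le> s powr (p-1)" using s T p by (intro powr_mono2) auto
    ultimately show ?thesis unfolding m_def h_def by (intro mult_mono) auto
  qed
  have "integral {T/2..T} (\<lambda>_. m) \<le> integral {T/2..T} h"
    by (rule integral_le) (use m_le int T in auto)
  then have "m * (T/2) \<le> integral {T/2..T} h" using T by (simp add: mult.commute)
  moreover have "0 \<le> integral {0..T/2} h"
    by (rule integral_nonneg) (use int in \<open>auto simp: h_def\<close>)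
  moreover have "integral {0..T/2} h + integral {T/2..T} h = LlogL_phi p \<alpha> c T"
    using Henstock_Kurzweil_Integration.integral_combine[of 0 "T/2" T h] int[of 0 T] T
    by (simp add: LlogL_phi_def h_def[abs_def])
  moreover have "m * (T/2) = 2 powr (-p) * K powr (- \<bar>\<alpha> * p\<bar>) * (T powr p * ln (c + T) powr (\<alpha> * p))"
  proof -
    have "(T/2) powr (p-1) * (T/2) = (T/2) powr p" using T by (simp add: powr_diff)
    moreover have "(T/2) powr p = 2 powr (-p) * T powr p" using T by (simp add: powr_divide powr_minus_divide)
    ultimately show ?thesis unfolding m_def by (simp add: algebra_simps)
  qed
  ultimately show ?thesis unfolding K_def by linarith
qed

lemma ln_add_le_powr_ratio:
  fixes c s T e :: real
  assumes c: "1 < c" and s: "0 < s" "s \<le> T" and e: "0 < e"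
  shows "ln (c + T) \<le> (1 + 1 / (e * ln c)) * (T / s) powr e * ln (c + s)"
proof -
  define x where "x = T / s"
  have x: "1 \<le> x" using s by (simp add: x_def)
  have lc: "0 < ln c" "ln c \<le> ln (c + s)" using c s by simp_all
  have "c + T \<le> (c + s) * x" using x c s by (simp add: x_def field_simps)
  then have "ln (c + T) \<le> ln (c + s) + ln x"
    using c s x by (simp add: ln_mult_pos[symmetric])
  moreover have "ln x \<le> x powr e / (e * ln c) * ln (c + s)"
  proof -
    have "ln x \<le> x powr e / e" by (rule ln_powr_bound[OF x e])
    also have "\<dots> = x powr e / (e * ln c) * ln c" using lc by simp
    also have "\<dots> \<le> x powr e / (e * ln c) * ln (c + s)" using lc e by (intro mult_left_mono) auto
    finally show ?thesis .
  qed
  moreover have "ln (c + s) \<le> x powr e * ln (c + s)"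
    using ge_one_powr_ge_zero[OF x, of e] e lc by simp
  moreover have "(1 + 1 / (e * ln c)) * x powr e * ln (c + s)
      = x powr e * ln (c + s) + x powr e / (e * ln c) * ln (c + s)"
    by (simp add: algebra_simps)
  ultimately show ?thesis unfolding x_def[symmetric] by linarith
qed

lemma powr_mult_ln_powr_quasi_mono:
  fixes a b c s T :: real
  assumes c: "1 < c" and a: "0 < a" and b: "b < 0" and s: "1 \<le> s" "s \<le> T"
  shows "s powr a * ln (c + s) powr b
           \<le> (1 + 1 / (a / - b * ln c)) powr (- b) * (T powr a * ln (c + T) powr b)"
proof -
  define e where "e = a / - b"
  define K where "K = 1 + 1 / (e * ln c)"
  have e: "0 < e" using a b by (simp add: e_def divide_neg_pos divide_pos_neg)
  have K: "0 < K" using e c by (simp add: K_def add_pos_pos)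
  have s0: "0 < s" and T0: "0 < T" using s by auto
  have lT: "0 < ln (c + T)" using c T0 by simp
  have "ln (c + T) \<le> K * (T / s) powr e * ln (c + s)"
    unfolding K_def by (rule ln_add_le_powr_ratio[OF c s0 s(2) e])
  then have "ln (c + s) powr b \<le> (ln (c + T) / (K * (T / s) powr e)) powr b"
    using b K s0 T0 lT by (intro powr_mono2') (simp_all add: divide_le_eq mult.commute mult.left_commute)
  also have "\<dots> = K powr (- b) * ((T / s) powr e) powr (- b) * ln (c + T) powr b"
    using K s0 T0 lT
    by (simp add: powr_divide powr_mult powr_minus_divide divide_inverse powr_minus inverse_powr)
  also have "((T / s) powr e) powr (- b) = (T / s) powr a"
    using b by (simp add: powr_powr e_def)
  finally have "s powr a * ln (c + s) powr b \<le> s powr a * (K powr (- b) * (T / s) powr a * ln (c + T) powr b)"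
    by (intro mult_left_mono) auto
  also have "\<dots> = K powr (- b) * (T powr a * ln (c + T) powr b)"
    using s0 T0 by (simp add: powr_divide)
  finally show ?thesis by (simp add: K_def e_def)
qed

lemma powr_mult_ln_powr_bounded:
  fixes a b c s :: real
  assumes c: "1 < c" and a: "a < 0" and b: "0 < b" and s: "1 \<le> s"
  shows "s powr a * ln (c + s) powr b \<le> ((1 + 1 / (- a / b * ln c)) * ln (c + 1)) powr b"
proof -
  define e where "e = - a / b"
  define K where "K = 1 + 1 / (e * ln c)"
  have e: "0 < e" using a b by (simp add: e_def divide_neg_pos divide_pos_neg)
  have K: "0 < K" using e c by (simp add: K_def add_pos_pos)
  have s0: "0 < s" using s by simp
  have "ln (c + s) \<le> K * (s / 1) powr e * ln (c + 1)"
    unfolding K_def by (rule ln_add_le_powr_ratio[OF c _ s e]) simp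
  then have "ln (c + s) powr b \<le> (K * s powr e * ln (c + 1)) powr b"
    using b c s by (intro powr_mono2) auto
  also have "\<dots> = (K * ln (c + 1)) powr b * s powr (- a)"
    using K s0 b c by (simp add: e_def powr_mult powr_powr)
  finally show ?thesis
    using s0 by (simp add: e_def K_def powr_minus field_simps)
qed

lemma powr_mult_ln_powr_quasi_mono_ex:
  fixes a b c :: real
  assumes c: "1 < c"
  shows "\<exists>K>0. \<forall>s T. 1 \<le> s \<longrightarrow> s \<le> T \<longrightarrow>
           s powr a * ln (c + s) powr b \<le> K * (1 + T powr a * ln (c + T) powr b)"
proof -
  have nonneg: "0 \<le> T powr a * ln (c + T) powr b" for T by simp
  consider "0 \<le> a" "0 \<le> b" | "a \<le> 0" "b \<le> 0" | "0 < a" "b < 0" | "a < 0" "0 < b" by linarith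
  then show ?thesis
  proof cases
    case 1
    have "s powr a * ln (c + s) powr b \<le> 1 * (1 + T powr a * ln (c + T) powr b)"
      if "1 \<le> s" "s \<le> T" for s T
      using 1 that c by (simp add: add_increasing mult_mono powr_mono2)
    then show ?thesis by (intro exI[of _ 1]) auto
  next
    case 2
    have "s powr a * ln (c + s) powr b \<le> (ln c powr b + 1) * (1 + T powr a * ln (c + T) powr b)"
      if s: "1 \<le> s" "s \<le> T" for s T
    proof -
      have "s powr a \<le> 1" using 2 s powr_mono[of a 0 s] by simp
      moreover have "ln (c + s) powr b \<le> ln c powr b" using 2 s c by (intro powr_mono2') auto
      ultimately have "s powr a * ln (c + s) powr b \<le> 1 * ln c powr b"
        by (intro mult_mono) auto
      also have "\<dots> \<le> (ln c powr b + 1) * (1 + T powr a * ln (c + T) powr b)"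
        using nonneg[of T] by (simp add: algebra_simps)
      finally show ?thesis .
    qed
    then show ?thesis by (intro exI[of _ "ln c powr b + 1"]) (auto simp: add_nonneg_pos)
  next
    case 3
    define K where "K = (1 + 1 / (a / - b * ln c)) powr (- b)"
    have "0 < 1 + 1 / (a / - b * ln c)"
      using 3 c by (intro add_pos_pos divide_pos_pos mult_pos_pos) auto
    then have K: "0 < K" unfolding K_def by (metis powr_gt_zero order_less_irrefl)
    have "s powr a * ln (c + s) powr b \<le> K * (1 + T powr a * ln (c + T) powr b)"
      if "1 \<le> s" "s \<le> T" for s T
      using powr_mult_ln_powr_quasi_mono[OF c 3 that, folded K_def] K
      by (simp add: distrib_left)
    with K show ?thesis by blast
  next
    case 4
    define K where "K = ((1 + 1 / (- a / b * ln c)) * ln (c + 1)) powr b"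
    have "0 < (1 + 1 / (- a / b * ln c)) * ln (c + 1)"
      using 4 c by (intro mult_pos_pos add_pos_pos divide_pos_pos) auto
    then have K: "0 < K" unfolding K_def by (metis powr_gt_zero order_less_irrefl)
    have "s powr a * ln (c + s) powr b \<le> K * (1 + T powr a * ln (c + T) powr b)"
      if "1 \<le> s" for s T
      using powr_mult_ln_powr_bounded[OF c 4 that, folded K_def] K nonneg[of T]
      by (simp add: distrib_left add_increasing2)
    with K show ?thesis by blast
  qed
qed

definition LlogL_H :: "real \<Rightarrow> real \<Rightarrow> nat \<Rightarrow> real" where
  "LlogL_H p \<alpha> n = max (sqrt (real n)) (real n powr (1 / p) * ln (exp 1 + real n) powr (- \<alpha>))"

lemma sqrt_le_LlogL_H: "sqrt (real n) \<le> LlogL_H p \<alpha> n"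
  by (simp add: LlogL_H_def)

lemma LlogL_H_pos: "1 \<le> n \<Longrightarrow> 0 < LlogL_H p \<alpha> n"
  using sqrt_le_LlogL_H[of n p \<alpha>] by (simp add: less_le_trans[OF _ sqrt_le_LlogL_H])

lemma one_le_ln_exp1_add: "0 \<le> x \<Longrightarrow> 1 \<le> ln (exp 1 + (x::real))"
  using ln_mono[of "exp 1" "exp 1 + x"] by simp

lemma ln_exp1_add_le_ln_add_sqrt:
  fixes c x H :: real
  assumes c: "1 < c" and x: "0 \<le> x" and H: "sqrt x \<le> H"
  shows "ln (exp 1 + x) \<le> (1 / ln c + 2) * ln (c + H)"
proof -
  define y where "y = c + sqrt x"
  have y: "0 < y" "1 \<le> ln y / ln c" using c x by (simp_all add: y_def add_pos_nonneg)
  have "y\<^sup>2 = c * c + 2 * c * sqrt x + x" using x by (simp add: y_def power2_eq_square algebra_simps)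
  moreover have "1 \<le> c * c" "0 \<le> 2 * c * sqrt x" using c x mult_mono[of 1 c 1 c] by simp_all
  ultimately have "1 + x \<le> y\<^sup>2" by linarith
  then have "exp 1 * (1 + x) \<le> exp 1 * y\<^sup>2" by simp
  moreover have "exp 1 + x \<le> exp 1 * (1 + x)"
    using x exp_ge_add_one_self[of 1] mult_right_mono[of 1 "exp 1" x] by (simp add: algebra_simps)
  ultimately have "exp 1 + x \<le> exp 1 * y\<^sup>2" by linarith
  then have "ln (exp 1 + x) \<le> 1 + 2 * ln y"
    using y x ln_mono[of "exp 1 + x" "exp 1 * y\<^sup>2"] by (simp add: ln_mult_pos ln_realpow add_pos_nonneg)
  also have "\<dots> \<le> (1 / ln c + 2) * ln y" using y by (simp add: algebra_simps)
  also have "\<dots> \<le> (1 / ln c + 2) * ln (c + H)"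
    using c H y by (intro mult_left_mono) (simp_all add: y_def)
  finally show ?thesis .
qed

lemma LlogL_H_le_powr:
  assumes p: "1 \<le> p" and n: "1 \<le> n"
  shows "LlogL_H p \<alpha> n \<le> (exp 1 + real n) powr (1 + \<bar>\<alpha>\<bar>)"
proof -
  define x where "x = exp 1 + real n"
  define L where "L = ln x"
  have n1: "1 \<le> real n" using n by simp
  have x: "1 \<le> x" "real n \<le> x" by (simp_all add: x_def add_increasing2)
  have L: "1 \<le> L" "L \<le> x"
    using one_le_ln_exp1_add[of "real n"] ln_le_minus_one[of x] x by (simp_all add: L_def x_def)
  have "x \<le> x powr (1 + \<bar>\<alpha>\<bar>)" using powr_mono[of 1 "1 + \<bar>\<alpha>\<bar>" x] x by simp
  moreover have "sqrt (real n) \<le> real n" using n1 real_sqrt_le_iff[of "real n" "real n ^ 2"] by (simp add: power2_eq_square)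
  moreover have "real n powr (1 / p) * L powr (- \<alpha>) \<le> x * x powr \<bar>\<alpha>\<bar>"
  proof (rule mult_mono)
    show "real n powr (1 / p) \<le> x"
      using powr_mono[of "1 / p" 1 "real n"] n1 p x by simp
    have "L powr (- \<alpha>) \<le> L powr \<bar>\<alpha>\<bar>" using L by (intro powr_mono) auto
    also have "\<dots> \<le> x powr \<bar>\<alpha>\<bar>" using L by (intro powr_mono2) auto
    finally show "L powr (- \<alpha>) \<le> x powr \<bar>\<alpha>\<bar>" .
  qed (use x in auto)
  moreover have "x * x powr \<bar>\<alpha>\<bar> = x powr (1 + \<bar>\<alpha>\<bar>)" using x by (simp add: powr_add)
  ultimately show ?thesis using x unfolding LlogL_H_def x_def L_def by linarith
qed

lemma ln_add_LlogL_H_le: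
  assumes p: "1 \<le> p" and c: "1 < c" and n: "1 \<le> n"
  shows "ln (c + LlogL_H p \<alpha> n) \<le> (ln (c + 1) + 1 + \<bar>\<alpha>\<bar>) * ln (exp 1 + real n)"
proof -
  define X where "X = (exp 1 + real n) powr (1 + \<bar>\<alpha>\<bar>)"
  have e: "1 \<le> exp 1 + real n" by (simp add: add_increasing2)
  then have X: "1 \<le> X" unfolding X_def by (simp add: ge_one_powr_ge_zero)
  have "ln (c + LlogL_H p \<alpha> n) \<le> ln ((c + 1) * X)"
    using LlogL_H_le_powr[OF p n, of \<alpha>] LlogL_H_pos[OF n, of p \<alpha>] X c
    by (intro ln_mono) (simp_all add: X_def distrib_right add_mono)
  also have "\<dots> = ln (c + 1) + (1 + \<bar>\<alpha>\<bar>) * ln (exp 1 + real n)"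
    using c X e by (simp add: ln_mult_pos X_def ln_powr)
  also have "\<dots> \<le> (ln (c + 1) + 1 + \<bar>\<alpha>\<bar>) * ln (exp 1 + real n)"
    using one_le_ln_exp1_add[of "real n"] c by (simp add: algebra_simps mult_le_cancel_left1)
  finally show ?thesis .
qed

lemma LlogL_H_growth:
  fixes p \<alpha> c :: real
  assumes p: "1 < p" and c: "1 < c"
  shows "\<exists>K>0. \<forall>n::nat. 1 \<le> n \<longrightarrow>
     real n \<le> K * (LlogL_H p \<alpha> n powr p * ln (c + LlogL_H p \<alpha> n) powr (\<alpha> * p))"
proof -
  define K where "K = max (1 / ln c + 2) (ln (c + 1) + 1 + \<bar>\<alpha>\<bar>)"
  have K: "1 \<le> K" using c by (simp add: K_def le_max_iff_disj)
  have "real n \<le> K powr \<bar>\<alpha> * p\<bar> * (LlogL_H p \<alpha> n powr p * ln (c + LlogL_H p \<alpha> n) powr (\<alpha> * p))"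
    if n: "1 \<le> n" for n
  proof -
    define H where "H = LlogL_H p \<alpha> n"
    define L where "L = ln (c + H)"
    define l where "l = ln (exp 1 + real n)"
    have H: "0 < H" using LlogL_H_pos[OF n] by (simp add: H_def)
    have l: "1 \<le> l" unfolding l_def by (rule one_le_ln_exp1_add) simp
    have L: "0 < L" using c H by (simp add: L_def)
    have "real n powr (1 / p) * l powr (- \<alpha>) \<le> H" by (simp add: H_def LlogL_H_def l_def)
    then have "(real n powr (1 / p) * l powr (- \<alpha>)) powr p \<le> H powr p"
      using p by (intro powr_mono2) auto
    then have Hp: "real n * l powr (- \<alpha> * p) \<le> H powr p"
      using p n l by (simp add: powr_mult powr_powr)
    have "l \<le> (1 / ln c + 2) * L"
      using ln_exp1_add_le_ln_add_sqrt[OF c _ sqrt_le_LlogL_H, of n p \<alpha>] by (simp add: L_def H_def l_def)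
    also have "\<dots> \<le> K * L" using L by (intro mult_right_mono) (auto simp: K_def)
    finally have lL: "l \<le> K * L" .
    have "L \<le> (ln (c + 1) + 1 + \<bar>\<alpha>\<bar>) * l"
      using ln_add_LlogL_H_le[of p c n \<alpha>] p c n by (simp add: L_def H_def l_def)
    also have "\<dots> \<le> K * l" using l by (intro mult_right_mono) (auto simp: K_def)
    finally have cmp: "K powr (- \<bar>\<alpha> * p\<bar>) * l powr (\<alpha> * p) \<le> L powr (\<alpha> * p)"
      using L l K lL by (intro powr_le_powr_of_comparable) auto
    have "real n = K powr \<bar>\<alpha> * p\<bar> * (real n * l powr (- \<alpha> * p) * (K powr (- \<bar>\<alpha> * p\<bar>) * l powr (\<alpha> * p)))"
      using K l by (simp add: powr_minus field_simps powr_add[symmetric])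
    also have "\<dots> \<le> K powr \<bar>\<alpha> * p\<bar> * (H powr p * L powr (\<alpha> * p))"
      using Hp cmp l K by (intro mult_left_mono mult_mono) auto
    finally show ?thesis by (simp add: H_def L_def)
  qed
  moreover have "0 < K powr \<bar>\<alpha> * p\<bar>" using K by simp
  ultimately show ?thesis by blast
qed

lemma LlogL_phi_quadratic_control:
  fixes p \<alpha> c s :: real
  assumes p: "1 < p" and c: "1 < c" and s: "0 < s"
  shows "2 powr (-p) * (1 + ln 2 / ln c) powr (- \<bar>\<alpha> * p\<bar>) * s\<^sup>2
           \<le> s powr (2 - p) * ln (c + s) powr (- \<alpha> * p) * LlogL_phi p \<alpha> c s"
proof -
  have ls: "0 < ln (c + s)" using c s by simp
  have "s\<^sup>2 = s powr (2 - p) * ln (c + s) powr (- \<alpha> * p) * (s powr p * ln (c + s) powr (\<alpha> * p))"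
    using s ls by (simp add: powr_numeral algebra_simps flip: powr_add)
  then show ?thesis
    using mult_left_mono[OF LlogL_phi_lower_bound[OF p c s, of \<alpha>],
        of "s powr (2 - p) * ln (c + s) powr (- \<alpha> * p)"]
    by (simp add: algebra_simps)
qed

lemma LlogL_phi_uniform_quadratic_control:
  fixes p \<alpha> c :: real
  assumes p: "1 < p" and c: "1 < c"
  obtains K where "0 < K" and "\<And>s T. 1 \<le> s \<Longrightarrow> s \<le> T \<Longrightarrow>
      s\<^sup>2 \<le> K * (1 + T powr (2 - p) * ln (c + T) powr (- \<alpha> * p)) * LlogL_phi p \<alpha> c s"
proof -
  let ?q = "\<lambda>s. s powr (2 - p) * ln (c + s) powr (- \<alpha> * p)"
  define \<kappa> where "\<kappa> = 2 powr (-p) * (1 + ln 2 / ln c) powr (- \<bar>\<alpha> * p\<bar>)"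
  have "0 < 1 + ln 2 / ln c" using c by (intro add_pos_nonneg) auto
  then have \<kappa>: "0 < \<kappa>" by (simp add: \<kappa>_def)
  obtain Kq where Kq: "0 < Kq" "\<And>s T. 1 \<le> s \<Longrightarrow> s \<le> T \<Longrightarrow> ?q s \<le> Kq * (1 + ?q T)"
    using powr_mult_ln_powr_quasi_mono_ex[OF c, of "2 - p" "- \<alpha> * p"] by blast
  show thesis
  proof (rule that)
    show "0 < Kq / \<kappa>" using Kq \<kappa> by simp
    fix s T :: real assume s: "1 \<le> s" "s \<le> T"
    have "\<kappa> * s\<^sup>2 \<le> ?q s * LlogL_phi p \<alpha> c s"
      using LlogL_phi_quadratic_control[OF p c, of s \<alpha>] s by (simp add: \<kappa>_def)
    also have "\<dots> \<le> Kq * (1 + ?q T) * LlogL_phi p \<alpha> c s"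
      using Kq(2)[OF s] LlogL_phi_nonneg by (intro mult_right_mono) auto
    finally show "s\<^sup>2 \<le> Kq / \<kappa> * (1 + ?q T) * LlogL_phi p \<alpha> c s"
      using \<kappa> by (simp add: field_simps)
  qed
qed

lemma LlogL_Young_data:
  fixes p \<alpha> c :: real
  assumes p: "1 < p" and c: "1 < c"
  obtains K where "0 < K" and "\<And>n H. 1 \<le> n \<Longrightarrow> H = LlogL_H p \<alpha> n \<Longrightarrow>
      0 < H \<and> real n \<le> H\<^sup>2 \<and> 0 < LlogL_phi p \<alpha> c H \<and> real n * H / LlogL_phi p \<alpha> c H \<le> K * H \<and>
      (\<exists>S\<ge>0. (\<forall>s. 1 \<le> s \<longrightarrow> s < H \<longrightarrow> s\<^sup>2 \<le> S * LlogL_phi p \<alpha> c s) \<and> S * real n / H \<le> K * H)"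
proof -
  let ?\<Phi> = "LlogL_phi p \<alpha> c"
  let ?q = "\<lambda>s. s powr (2 - p) * ln (c + s) powr (- \<alpha> * p)"
  let ?h = "\<lambda>s. s powr p * ln (c + s) powr (\<alpha> * p)"
  define \<kappa> where "\<kappa> = 2 powr (-p) * (1 + ln 2 / ln c) powr (- \<bar>\<alpha> * p\<bar>)"
  have "0 < 1 + ln 2 / ln c" using c by (intro add_pos_nonneg) auto
  then have \<kappa>: "0 < \<kappa>" by (simp add: \<kappa>_def)
  obtain Kg where Kg: "0 < Kg" "\<And>n. 1 \<le> n \<Longrightarrow> real n \<le> Kg * ?h (LlogL_H p \<alpha> n)"
    using LlogL_H_growth[OF p c, of \<alpha>] by blast
  obtain Kq where Kq: "0 < Kq" "\<And>s T. 1 \<le> s \<Longrightarrow> s \<le> T \<Longrightarrow> s\<^sup>2 \<le> Kq * (1 + ?q T) * ?\<Phi> s"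
    using LlogL_phi_uniform_quadratic_control[OF p c, of \<alpha>] by blast
  define K where "K = max (Kg / \<kappa>) (Kq * (1 + Kg))"
  show thesis
  proof (rule that)
    show "0 < K" using Kg \<kappa> by (simp add: K_def less_max_iff_disj)
    fix n and H assume n: "1 \<le> n" and H_def: "H = LlogL_H p \<alpha> n"
    have H: "0 < H" "real n \<le> H\<^sup>2" "real n \<le> Kg * ?h H"
      using LlogL_H_pos[OF n] power_mono[OF sqrt_le_LlogL_H[of n p \<alpha>], of 2] Kg(2)[OF n]
      by (simp_all add: H_def)
    have \<Phi>H: "\<kappa> * ?h H \<le> ?\<Phi> H" using LlogL_phi_lower_bound[OF p c H(1)] by (simp add: \<kappa>_def)
    have \<kappa>hH: "0 < \<kappa> * ?h H" using H c \<kappa> by simp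
    then have \<Phi>H_pos: "0 < ?\<Phi> H" using \<Phi>H by linarith
    have "real n * H / ?\<Phi> H \<le> Kg * ?h H * H / (\<kappa> * ?h H)"
      using H Kg \<Phi>H \<kappa>hH by (intro frac_le mult_right_mono) auto
    also have "\<dots> = Kg / \<kappa> * H" using H c by simp
    also have "\<dots> \<le> K * H" using H by (intro mult_right_mono) (auto simp: K_def)
    finally have first: "real n * H / ?\<Phi> H \<le> K * H" .
    have "real n * ?q H \<le> Kg * (?h H * ?q H)"
      using mult_right_mono[OF H(3), of "?q H"] by (simp add: mult.assoc)
    also have "?h H * ?q H = H\<^sup>2"
      using H c by (simp add: powr_numeral algebra_simps flip: powr_add)
    finally have "real n * (1 + ?q H) \<le> (1 + Kg) * H\<^sup>2" using H(2) by (simp add: algebra_simps)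
    then have "Kq * (1 + ?q H) * real n / H \<le> Kq * ((1 + Kg) * H\<^sup>2) / H"
      using Kq H by (simp add: divide_right_mono mult_left_mono mult.commute mult.left_commute)
    also have "\<dots> \<le> K * H" using H by (simp add: K_def power2_eq_square mult_right_mono)
    finally show "0 < H \<and> real n \<le> H\<^sup>2 \<and> 0 < ?\<Phi> H \<and> real n * H / ?\<Phi> H \<le> K * H \<and>
      (\<exists>S\<ge>0. (\<forall>s. 1 \<le> s \<longrightarrow> s < H \<longrightarrow> s\<^sup>2 \<le> S * ?\<Phi> s) \<and> S * real n / H \<le> K * H)"
      using H \<Phi>H_pos first Kq by (intro conjI exI[of _ "Kq * (1 + ?q H)"]) auto
  qed
qed

theorem corollary5p3:
  fixes p \<alpha> c :: real
  assumes "1 < p" and "c > 1"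
    and "convex_on {0..} (LlogL_phi p \<alpha> c)"
  shows "\<exists>C>0. \<forall>N::nat. \<forall>D::nat. \<forall>(A::int set) (B::int set) (a::int \<Rightarrow> complex).
           finite B \<and> A \<subseteq> B \<and> card A \<le> N \<and> card B < D \<longrightarrow>
           (\<Sum>j\<in>A. cmod (a j)) \<le>
             C * max (sqrt (real (card A)))
                     (real (card A) powr (1 / p) * (ln (exp 1 + real (card A))) powr (- \<alpha>))
             * luxemburg_norm (LlogL_phi p \<alpha> c) (\<lambda>x. \<Sum>j\<in>B. a j * trig j x)"
proof -
  note p = assms(1) and c = assms(2) and cv = assms(3)
  let ?\<Phi> = "LlogL_phi p \<alpha> c"
  have mono: "mono ?\<Phi>" by (rule LlogL_phi_mono[OF cv])
  have \<Phi>0: "?\<Phi> 0 = 0" by (simp add: LlogL_phi_nonpos)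
  obtain K where K: "0 < K" and data: "\<And>n H. 1 \<le> n \<Longrightarrow> H = LlogL_H p \<alpha> n \<Longrightarrow>
      0 < H \<and> real n \<le> H\<^sup>2 \<and> 0 < ?\<Phi> H \<and> real n * H / ?\<Phi> H \<le> K * H \<and>
      (\<exists>S\<ge>0. (\<forall>s. 1 \<le> s \<longrightarrow> s < H \<longrightarrow> s\<^sup>2 \<le> S * ?\<Phi> s) \<and> S * real n / H \<le> K * H)"
    using LlogL_Young_data[OF p c] by blast
  have "(\<Sum>j\<in>A. cmod (a j))
      \<le> (K + pi) / pi * LlogL_H p \<alpha> (card A) * luxemburg_norm ?\<Phi> (\<lambda>x. \<Sum>j\<in>B. a j * trig j x)"
    if B: "finite B" and AB: "A \<subseteq> B" for A B and a :: "int \<Rightarrow> complex"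
  proof (cases "A = {}")
    case False
    then have "1 \<le> card A" using B AB by (simp add: Suc_le_eq card_gt_0_iff finite_subset)
    then show ?thesis
      using data[OF _ refl] K sum_norm_coeffs_le_luxemburg_norm[OF mono \<Phi>0 cv B AB False] by force
  qed (simp add: LlogL_H_def)
  moreover have "0 < (K + pi) / pi" using K by (intro divide_pos_pos add_pos_pos) auto
  ultimately show ?thesis unfolding LlogL_H_def by blast
qed

end
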